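(* Let $q$ be a power of an odd prime, $0<r_1<r_2<n$ integers, $a_1,a_2\in\mathbb{F}_{q^n}^*$ with the multiplicative order of $a_2$ dividing $q^{r_1}-1$, and $S(x)=a_1x^{q^{r_1}}+a_2x^{q^{r_2}}$. Then for each $t\in\{r_1,r_2\}$, $S(x)$ is a scattered polynomial of index $t$ over $\mathbb{F}_{q^n}$ if and only if $\gcd(r_2-r_1,n)=1$.
   Context: An $\mathbb{F}_q$-linearized polynomial $S\in\mathbb{F}_{q^n}[x]$ is a scattered polynomial of index $t$ over $\mathbb{F}_{q^n}$ if for all $y,z\in\mathbb{F}_{q^n}^*$, $\frac{S(y)}{y^{q^t}}=\frac{S(z)}{z^{q^t}}$ implies $y/z\in\mathbb{F}_q$. *)

theory Defs
  imports "HOL-Computational_Algebra.Primes"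
begin

definition mult_order :: "'a::field \<Rightarrow> nat" where
  "mult_order a = (LEAST k. 0 < k \<and> a ^ k = 1)"

text \<open>The subfield F_q of F_{q^n}: the fixed points of the q-Frobenius.\<close>
definition subfield_q :: "nat \<Rightarrow> 'a::field set" where
  "subfield_q q = {x. x ^ q = x}"

text \<open>S is scattered of index t over F_{q^n} (the ambient finite field type).\<close>
definition scattered :: "nat \<Rightarrow> ('a::field \<Rightarrow> 'a) \<Rightarrow> nat \<Rightarrow> bool" where
  "scattered q S t \<longleftrightarrow>
     (\<forall>y z. y \<noteq> 0 \<longrightarrow> z \<noteq> 0 \<longrightarrow> S y / y ^ (q ^ t) = S z / z ^ (q ^ t)
        \<longrightarrow> y / z \<in> subfield_q q)"

end

theory Submission
  imports Defs "HOL-Computational_Algebra.Polynomial"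
begin

text \<open>
  For \<open>t = r1\<close> the quotient \<open>S(x) / x^(q^t)\<close> equals \<open>a1 + a2 * x^(q^r2 - q^r1)\<close>, and
  symmetrically for \<open>t = r2\<close>; so in both cases \<open>S(y) / y^(q^t) = S(z) / z^(q^t)\<close> iff
  \<open>w = y / z\<close> satisfies \<open>w^(q^r2) = w^(q^r1)\<close>. Since the Frobenius map is injective, this
  means that \<open>w\<close> is fixed by \<open>x \<mapsto> x^(q^d)\<close> for \<open>d = r2 - r1\<close>, i.e. (by Bezout) that \<open>w\<close> lies
  in the subfield with \<open>q^g\<close> elements, \<open>g = gcd d n\<close>. Hence \<open>S\<close> is scattered iff that subfield
  is contained in \<open>F_q\<close>, and counting the roots of \<open>X^(q^g) - X\<close> and of \<open>X^q - X\<close> shows that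
  this happens iff \<open>g = 1\<close>.
\<close>

definition frobenius_fixed :: "nat \<Rightarrow> nat \<Rightarrow> 'a::field set" where
  "frobenius_fixed q m = {x. x ^ (q ^ m) = x}"

lemma subfield_q_eq_frobenius_fixed: "subfield_q q = frobenius_fixed q 1"
  by (simp add: subfield_q_def frobenius_fixed_def)

lemma frobenius_fixed_mult:
  assumes "x \<in> frobenius_fixed q a"
  shows "x \<in> frobenius_fixed q (a * m)"
proof (induction m)
  case (Suc m)
  then show ?case
    using assms by (simp add: frobenius_fixed_def power_add power_mult)
qed (simp add: frobenius_fixed_def)

lemma frobenius_fixed_gcd:
  assumes "x \<in> frobenius_fixed q a" "x \<in> frobenius_fixed q b" "a \<noteq> 0"
  shows "x \<in> frobenius_fixed q (gcd a b)"
proof -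
  obtain u v where uv: "a * u = b * v + gcd a b"
    using bezout_nat[OF \<open>a \<noteq> 0\<close>] by blast
  have "x = x ^ (q ^ (b * v + gcd a b))"
    using frobenius_fixed_mult[OF assms(1), of u] by (simp add: uv frobenius_fixed_def)
  also have "\<dots> = (x ^ (q ^ (b * v))) ^ (q ^ gcd a b)"
    by (simp add: power_add power_mult)
  also have "x ^ (q ^ (b * v)) = x"
    using frobenius_fixed_mult[OF assms(2), of v] by (simp add: frobenius_fixed_def)
  finally show ?thesis
    by (simp add: frobenius_fixed_def)
qed

text \<open>
  The library's \<open>finite_field_power_card_eq_same\<close> is stated for the sort \<open>finite_field\<close>,
  which a type of sort \<open>{field, finite}\<close> does not carry.
\<close>
lemma power_card_UNIV_eq_same:
  fixes x :: "'a::{field, finite}"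
  shows "x ^ card (UNIV :: 'a set) = x"
proof (cases "x = 0")
  case False
  have "x * (\<Prod>y\<in>UNIV - {0}. x * y) = x ^ Suc (card (UNIV :: 'a set) - 1) * \<Prod>(UNIV - {0})"
    by (simp add: prod.distrib mult_ac)
  also have "Suc (card (UNIV :: 'a set) - 1) = card (UNIV :: 'a set)"
    using finite_UNIV_card_ge_0[where ?'a = 'a] by simp
  also have "(\<Prod>y\<in>UNIV - {0}. x * y) = (\<Prod>y\<in>UNIV - {0}. y)"
    by (rule prod.reindex_bij_witness[of _ "\<lambda>y. y / x" "\<lambda>y. x * y"]) (use False in auto)
  finally show ?thesis
    by simp
qed (use finite_UNIV_card_ge_0[where ?'a = 'a] in auto)

lemma frobenius_power_eq_iff:
  fixes x y :: "'a::field"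
  assumes "\<forall>w::'a. w ^ (q ^ n) = w" and "r \<le> n"
  shows "x ^ (q ^ r) = y ^ (q ^ r) \<longleftrightarrow> x = y"
proof
  have n: "q ^ n = q ^ r * q ^ (n - r)"
    using \<open>r \<le> n\<close> by (simp flip: power_add)
  assume "x ^ (q ^ r) = y ^ (q ^ r)"
  then have "(x ^ (q ^ r)) ^ (q ^ (n - r)) = (y ^ (q ^ r)) ^ (q ^ (n - r))"
    by simp
  then show "x = y"
    using assms(1) by (simp add: n power_mult)
qed simp

lemma power_eq_Suc_geometric_sum:
  fixes Q :: nat
  assumes "Q \<ge> 1"
  shows "Q ^ m = Suc ((Q - 1) * (\<Sum>i<m. Q ^ i))"
proof -
  have "int Q ^ m - 1 = (int Q - 1) * (\<Sum>i<m. int Q ^ i)"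
    by (rule power_diff_1_eq)
  then have "int (Q ^ m) = int (Suc ((Q - 1) * (\<Sum>i<m. Q ^ i)))"
    using assms by (simp add: of_nat_diff)
  then show ?thesis
    by (simp only: of_nat_eq_iff)
qed

lemma power_power_minus_self_factor:
  fixes x :: "'a::comm_ring_1"
  assumes "Q \<ge> 1"
  shows "x ^ (Q ^ m) - x = (x ^ Q - x) * (\<Sum>j < (\<Sum>i<m. Q ^ i). (x ^ (Q - 1)) ^ j)"
proof -
  define K where "K = (\<Sum>i<m. Q ^ i)"
  define y where "y = x ^ (Q - 1)"
  have "x ^ (Q ^ m) - x = x * (y ^ K - 1)"
    using power_eq_Suc_geometric_sum[OF assms, of m]
    by (simp add: K_def y_def power_mult right_diff_distrib)
  also have "\<dots> = x * ((y - 1) * (\<Sum>j<K. y ^ j))"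
    by (simp add: power_diff_1_eq)
  also have "\<dots> = (x ^ Q - x) * (\<Sum>j<K. y ^ j)"
    using assms by (cases Q) (simp_all add: y_def algebra_simps)
  finally show ?thesis
    by (simp add: K_def y_def)
qed

lemma card_power_fixed_le:
  assumes "q \<ge> 2"
  shows "card {x::'a::idom. x ^ q = x} \<le> q"
proof -
  define B :: "'a poly" where "B = monom 1 q - [:0, 1:]"
  have "coeff B q = 1"
    using assms by (simp add: B_def coeff_pCons split: nat.split)
  then have "B \<noteq> 0"
    by auto
  moreover have "degree B \<le> q"
    using assms degree_diff_le[of "monom (1::'a) q" q "[:0, 1:]"]
    by (simp add: B_def degree_monom_le)
  moreover have "{x. poly B x = 0} = {x. x ^ q = x}"
    by (simp add: B_def poly_monom)
  ultimately show ?thesis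
    using card_poly_roots_bound[of B] by simp
qed

text \<open>
  Every field element is a root of \<open>X\<^bsup>Q\<^sup>m\<^esup> - X = (X\<^sup>Q - X) H\<close>, and the cofactor \<open>H\<close> has
  degree \<open>Q\<^sup>m - Q\<close>, so at least \<open>Q\<close> elements are roots of \<open>X\<^sup>Q - X\<close>.
\<close>
lemma card_power_fixed_ge:
  fixes Q m :: nat
  assumes card: "card (UNIV :: 'a::{field, finite} set) = Q ^ m" and "Q \<ge> 2" "m \<ge> 1"
  shows "Q \<le> card {x::'a. x ^ Q = x}"
proof -
  define K where "K = (\<Sum>i<m. Q ^ i)"
  define H :: "'a poly" where "H = (\<Sum>j<K. monom 1 ((Q - 1) * j))"
  have poly_H: "poly H x = (\<Sum>j<K. (x ^ (Q - 1)) ^ j)" for x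
    by (simp add: H_def poly_sum poly_monom power_mult)
  have "K \<ge> 1"
    using \<open>m \<ge> 1\<close> member_le_sum[of 0 "{..<m}" "\<lambda>i. Q ^ i"] by (simp add: K_def)
  moreover have "Q ^ m = Suc ((Q - 1) * K)"
    unfolding K_def using \<open>Q \<ge> 2\<close> by (intro power_eq_Suc_geometric_sum) simp
  ultimately have Qm: "Q ^ m = Q + (Q - 1) * (K - 1)"
    using \<open>Q \<ge> 2\<close> by (cases K; cases Q) simp_all
  have "poly H 0 = 1"
    using \<open>K \<ge> 1\<close> \<open>Q \<ge> 2\<close> by (simp add: poly_H power_0_left)
  then have "H \<noteq> 0"
    by auto
  have "degree H \<le> (Q - 1) * (K - 1)"
    unfolding H_def
    by (rule degree_sum_le) (auto simp: degree_monom_eq intro: mult_le_mono2)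
  have covered: "UNIV \<subseteq> {x::'a. x ^ Q = x} \<union> {x. poly H x = 0}"
  proof
    fix x :: 'a
    have "(x ^ Q - x) * poly H x = 0"
      using power_power_minus_self_factor[of Q x m] power_card_UNIV_eq_same[of x] \<open>Q \<ge> 2\<close>
      by (simp add: card poly_H K_def)
    then show "x \<in> {x. x ^ Q = x} \<union> {x. poly H x = 0}"
      by auto
  qed
  have "Q ^ m \<le> card ({x::'a. x ^ Q = x} \<union> {x. poly H x = 0})"
    using card_mono[OF _ covered] by (simp add: card)
  also have "\<dots> \<le> card {x::'a. x ^ Q = x} + card {x. poly H x = 0}"
    by (rule card_Un_le)
  also have "card {x. poly H x = 0} \<le> (Q - 1) * (K - 1)"
    using card_poly_roots_bound[OF \<open>H \<noteq> 0\<close>] \<open>degree H \<le> _\<close> by simp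
  finally show ?thesis
    using Qm by simp
qed

lemma frobenius_fixed_subset_subfield_iff:
  assumes card: "card (UNIV :: 'a::{field, finite} set) = q ^ n"
    and "q \<ge> 2" "n > 0" "d \<noteq> 0"
  shows "(frobenius_fixed q d :: 'a set) \<subseteq> subfield_q q \<longleftrightarrow> gcd d n = 1"
proof
  assume sub: "(frobenius_fixed q d :: 'a set) \<subseteq> subfield_q q"
  show "gcd d n = 1"
  proof (rule ccontr)
    define g where "g = gcd d n"
    assume "gcd d n \<noteq> 1"
    moreover have "g \<noteq> 0"
      using \<open>n > 0\<close> by (simp add: g_def)
    ultimately have "g \<ge> 2"
      unfolding g_def by linarith
    obtain m where m: "n = g * m"
      unfolding g_def by (rule dvdE[OF gcd_dvd2])
    obtain c where c: "d = g * c"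
      unfolding g_def by (rule dvdE[OF gcd_dvd1])
    have qg: "q ^ 1 < q ^ g"
      using \<open>q \<ge> 2\<close> \<open>g \<ge> 2\<close> by (intro power_strict_increasing) auto
    also have "q ^ g \<le> card (frobenius_fixed q g :: 'a set)"
    proof -
      have "card (UNIV :: 'a set) = (q ^ g) ^ m"
        by (simp add: card m power_mult)
      moreover have "m \<ge> 1"
        using \<open>n > 0\<close> m by (cases m) auto
      moreover have "q ^ g \<ge> 2"
        using qg \<open>q \<ge> 2\<close> by simp
      ultimately show ?thesis
        using card_power_fixed_ge[of "q ^ g" m] by (simp add: frobenius_fixed_def)
    qed
    also have "\<dots> \<le> card (subfield_q q :: 'a set)"
      using sub frobenius_fixed_mult[of _ q g c] by (intro card_mono) (auto simp: c)
    also have "\<dots> \<le> q"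
      using card_power_fixed_le[OF \<open>q \<ge> 2\<close>] by (simp add: subfield_q_def)
    finally show False
      by simp
  qed
next
  assume "gcd d n = 1"
  show "(frobenius_fixed q d :: 'a set) \<subseteq> subfield_q q"
  proof
    fix x :: 'a
    assume "x \<in> frobenius_fixed q d"
    moreover have "x \<in> frobenius_fixed q n"
      using power_card_UNIV_eq_same[of x] by (simp add: card frobenius_fixed_def)
    ultimately show "x \<in> subfield_q q"
      using frobenius_fixed_gcd[of x q d n] \<open>d \<noteq> 0\<close> \<open>gcd d n = 1\<close>
      by (simp add: subfield_q_eq_frobenius_fixed)
  qed
qed

lemma two_term_quotient_eq_iff:
  fixes y z c e :: "'a::field"
  assumes "y \<noteq> 0" "z \<noteq> 0" "e \<noteq> 0"
  shows "(c * y ^ A + e * y ^ B) / y ^ A = (c * z ^ A + e * z ^ B) / z ^ A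
         \<longleftrightarrow> (y / z) ^ B = (y / z) ^ A"
proof -
  have split: "(c * w ^ A + e * w ^ B) / w ^ A = c + e * (w ^ B / w ^ A)" if "w \<noteq> 0" for w :: 'a
    using that by (simp add: field_simps)
  have "(c * y ^ A + e * y ^ B) / y ^ A = (c * z ^ A + e * z ^ B) / z ^ A
        \<longleftrightarrow> y ^ B / y ^ A = z ^ B / z ^ A"
    by (simp only: split[OF \<open>y \<noteq> 0\<close>] split[OF \<open>z \<noteq> 0\<close>] add_left_cancel mult_cancel_left)
       (simp add: \<open>e \<noteq> 0\<close>)
  also have "\<dots> \<longleftrightarrow> (y / z) ^ B = (y / z) ^ A"
    using assms by (simp add: power_divide frac_eq_eq mult.commute)
  finally show ?thesis .
qed

lemma scattered_two_term_iff:
  fixes a1 a2 :: "'a::field"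
  assumes frobenius_n: "\<forall>x::'a. x ^ (q ^ n) = x"
    and "q > 0" "r1 < r2" "r1 \<le> n" "a1 \<noteq> 0" "a2 \<noteq> 0" "t \<in> {r1, r2}"
  shows "scattered q (\<lambda>x. a1 * x ^ (q ^ r1) + a2 * x ^ (q ^ r2)) t
           \<longleftrightarrow> (frobenius_fixed q (r2 - r1) :: 'a set) \<subseteq> subfield_q q"
proof -
  let ?S = "\<lambda>x::'a. a1 * x ^ (q ^ r1) + a2 * x ^ (q ^ r2)"
  have quotient_eq:
    "?S y / y ^ (q ^ t) = ?S z / z ^ (q ^ t) \<longleftrightarrow> y / z \<in> frobenius_fixed q (r2 - r1)"
    if "y \<noteq> 0" "z \<noteq> 0" for y z
  proof -
    have "?S y / y ^ (q ^ t) = ?S z / z ^ (q ^ t) \<longleftrightarrow> (y / z) ^ (q ^ r2) = (y / z) ^ (q ^ r1)"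
      using \<open>t \<in> {r1, r2}\<close> two_term_quotient_eq_iff[OF that \<open>a2 \<noteq> 0\<close>, of a1 "q ^ r1" "q ^ r2"]
        two_term_quotient_eq_iff[OF that \<open>a1 \<noteq> 0\<close>, of a2 "q ^ r2" "q ^ r1"]
      by (auto simp: add.commute)
    also have "(y / z) ^ (q ^ r2) = ((y / z) ^ (q ^ (r2 - r1))) ^ (q ^ r1)"
      using \<open>r1 < r2\<close> by (simp flip: power_mult power_add)
    also have "\<dots> = (y / z) ^ (q ^ r1) \<longleftrightarrow> (y / z) ^ (q ^ (r2 - r1)) = y / z"
      by (rule frobenius_power_eq_iff[OF frobenius_n \<open>r1 \<le> n\<close>])
    finally show ?thesis
      by (simp add: frobenius_fixed_def)
  qed
  show ?thesis
  proof
    assume scattered: "scattered q ?S t"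
    show "(frobenius_fixed q (r2 - r1) :: 'a set) \<subseteq> subfield_q q"
    proof
      fix w :: 'a
      assume w: "w \<in> frobenius_fixed q (r2 - r1)"
      show "w \<in> subfield_q q"
      proof (cases "w = 0")
        case True
        then show ?thesis
          using \<open>q > 0\<close> by (simp add: subfield_q_def)
      next
        case False
        then have "?S w / w ^ (q ^ t) = ?S 1 / 1 ^ (q ^ t)"
          using quotient_eq[OF False one_neq_zero] w by simp
        then have "w / 1 \<in> subfield_q q"
          by (rule scattered[unfolded scattered_def, rule_format, OF False one_neq_zero])
        then show ?thesis
          by simp
      qed
    qed
  next
    assume sub: "(frobenius_fixed q (r2 - r1) :: 'a set) \<subseteq> subfield_q q"
    show "scattered q ?S t"
      unfolding scattered_def
    proof (intro allI impI)
      fix y z :: 'a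
      assume "y \<noteq> 0" "z \<noteq> 0" "?S y / y ^ (q ^ t) = ?S z / z ^ (q ^ t)"
      then show "y / z \<in> subfield_q q"
        using quotient_eq sub by blast
    qed
  qed
qed

theorem mainTheorem8:
  fixes a1 a2 :: "'a::{field, finite}"
    and p k q n r1 r2 :: nat
  assumes "prime p" and "odd p" and "k > 0" and "q = p ^ k"
    and "card (UNIV :: 'a set) = q ^ n"
    and "0 < r1" and "r1 < r2" and "r2 < n"
    and "a1 \<noteq> 0" and "a2 \<noteq> 0"
    and "mult_order a2 dvd q ^ r1 - 1"
  shows "\<forall>t \<in> {r1, r2}.
           scattered q (\<lambda>x. a1 * x ^ (q ^ r1) + a2 * x ^ (q ^ r2)) t
             \<longleftrightarrow> gcd (r2 - r1) n = 1"
proof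
  fix t
  assume t: "t \<in> {r1, r2}"
  have "p ^ 1 \<le> p ^ k"
    using \<open>k > 0\<close> prime_gt_0_nat[OF \<open>prime p\<close>] by (intro power_increasing) auto
  then have "q \<ge> 2"
    using \<open>q = p ^ k\<close> prime_ge_2_nat[OF \<open>prime p\<close>] by simp
  have "\<forall>x::'a. x ^ (q ^ n) = x"
    using power_card_UNIV_eq_same \<open>card (UNIV :: 'a set) = q ^ n\<close> by metis
  then have "scattered q (\<lambda>x. a1 * x ^ (q ^ r1) + a2 * x ^ (q ^ r2)) t
               \<longleftrightarrow> (frobenius_fixed q (r2 - r1) :: 'a set) \<subseteq> subfield_q q"
    using scattered_two_term_iff[of q n r1 r2 a1 a2 t] assms(7-10) t \<open>q \<ge> 2\<close> by simp
  also have "\<dots> \<longleftrightarrow> gcd (r2 - r1) n = 1"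
    using frobenius_fixed_subset_subfield_iff[of q n "r2 - r1"] assms(5,7,8) \<open>q \<ge> 2\<close> by simp
  finally show "scattered q (\<lambda>x. a1 * x ^ (q ^ r1) + a2 * x ^ (q ^ r2)) t
                  \<longleftrightarrow> gcd (r2 - r1) n = 1" .
qed

end
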